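(* Let $\mathcal{E}$ be a finite-dimensional Euclidean space, $e\in\mathcal{E}$ nonzero, and let $C$ be a compact convex set contained in the hyperplane $H=\{x\in\mathcal{E}: \langle e,x\rangle=1\}$. If $C$ is amenable, then its conic hull $\mathcal{K}=\operatorname{cone}C=\{\lambda x: x\in C,\lambda\ge0\}$ is also amenable.
   Context: A face of a closed convex set $C$ is a closed convex subset $F\subseteq C$ such that whenever $x,y\in C$ and $\alpha x+(1-\alpha)y\in F$ for some $\alpha\in(0,1)$, then $x,y\in F$. A face $F$ of a closed convex set $C$ is amenable if for every bounded set $B$ there exists $\kappa>0$ such that $\operatorname{dist}(x,F)\le\kappa\operatorname{dist}(x,C)$ for all $x\in(\operatorname{aff}F)\cap B$; $C$ is amenable if all its faces are amenable. For a closed convex cone $\mathcal{K}$ this is equivalent to: for every face $\mathcal{F}$ there is $\kappa>0$ with $\operatorname{dist}(x,\mathcal{F})\le\kappa\operatorname{dist}(x,\mathcal{K})$ for all $x\in\operatorname{span}\mathcal{F}$. *)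

theory Defs
  imports "HOL-Analysis.Analysis"
begin

text \<open>The library notion face_of captures everything except closedness, which we add.\<close>
definition is_face :: "'a::euclidean_space set \<Rightarrow> 'a set \<Rightarrow> bool" where
  "is_face F C \<longleftrightarrow> closed F \<and> convex F \<and> F \<subseteq> C \<and>
     (\<forall>x\<in>C. \<forall>y\<in>C. \<forall>\<alpha>::real. 0 < \<alpha> \<and> \<alpha> < 1 \<and> \<alpha> *\<^sub>R x + (1 - \<alpha>) *\<^sub>R y \<in> F
        \<longrightarrow> x \<in> F \<and> y \<in> F)"

definition amenable_face :: "'a::euclidean_space set \<Rightarrow> 'a set \<Rightarrow> bool" where
  "amenable_face F C \<longleftrightarrow>
     (\<forall>B. bounded B \<longrightarrow>
        (\<exists>\<kappa>>0. \<forall>x \<in> affine hull F \<inter> B. infdist x F \<le> \<kappa> * infdist x C))"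

definition amenable :: "'a::euclidean_space set \<Rightarrow> bool" where
  "amenable C \<longleftrightarrow> (\<forall>F. is_face F C \<longrightarrow> amenable_face F C)"

definition conic_hull :: "'a::real_vector set \<Rightarrow> 'a set" where
  "conic_hull C = {t *\<^sub>R x | t x. x \<in> C \<and> (0::real) \<le> t}"

end

theory Submission
  imports Defs
begin

text \<open>
  A face \<open>F \<noteq> {0}\<close> of \<open>K = cone C\<close> is itself a cone, namely the cone over the face \<open>G = F \<inter> C\<close>
  of \<open>C\<close>. Take \<open>x\<close> in the span of \<open>F\<close> and let \<open>t = \<langle>e, x\<rangle>\<close>. If \<open>2 M t \<le> |x|\<close>, where \<open>M\<close> bounds
  the norms in \<open>C\<close>, then \<open>x\<close> is at distance of order \<open>|x|\<close> from \<open>K\<close>, while \<open>0 \<in> F\<close> is at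
  distance \<open>|x|\<close>. Otherwise \<open>t > 0\<close> and \<open>z = x / t\<close> lies in the affine hull of \<open>G\<close> and in the
  ball of radius \<open>2 M\<close>, so amenability of \<open>G\<close> bounds \<open>dist(z, G)\<close> by \<open>dist(z, C)\<close>. On the
  hyperplane, \<open>dist(z, C)\<close> is in turn bounded by \<open>dist(z, K)\<close> because \<open>C\<close> is bounded, and
  distances to cones are positively homogeneous, which carries the estimate from \<open>z\<close> back to \<open>x\<close>.
\<close>

lemma le_infdistI:
  assumes "A \<noteq> {}" "\<And>y. y \<in> A \<Longrightarrow> d \<le> dist x y"
  shows "d \<le> infdist x A"
  using assms by (simp add: infdist_notempty cINF_greatest)

lemma infdist_scaleR_conic:
  fixes K :: "'a::real_normed_vector set"
  assumes "conic K" "0 < t"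
  shows "infdist (t *\<^sub>R x) K = t * infdist x K"
proof (cases "K = {}")
  case False
  have scale_le: "s * infdist y K \<le> infdist (s *\<^sub>R y) K" if "0 < s" for s y
  proof -
    have "s * infdist y K \<le> dist (s *\<^sub>R y) k" if "k \<in> K" for k
    proof -
      have "s * infdist y K \<le> s * dist y ((1 / s) *\<^sub>R k)"
        using conicD[OF \<open>conic K\<close> \<open>k \<in> K\<close>] \<open>0 < s\<close> by (simp add: infdist_le)
      also have "\<dots> = norm (s *\<^sub>R (y - (1 / s) *\<^sub>R k))"
        using \<open>0 < s\<close> by (simp add: dist_norm)
      also have "\<dots> = dist (s *\<^sub>R y) k"
        using \<open>0 < s\<close> by (simp add: dist_norm scaleR_diff_right)
      finally show ?thesis .
    qed
    then show ?thesis
      using False by (intro le_infdistI)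
  qed
  have "infdist (t *\<^sub>R x) K \<le> t * infdist x K"
    using scale_le[of "1 / t" "t *\<^sub>R x"] \<open>0 < t\<close> by (simp add: divide_simps mult.commute)
  with scale_le[OF \<open>0 < t\<close>, of x] show ?thesis by linarith
qed (simp add: infdist_def)

lemma conic_hull_eq_hull: "conic_hull C = conic hull C"
  by (auto simp: conic_hull_def conic_hull_explicit)

lemma is_face_iff_closed_face_of: "is_face F C \<longleftrightarrow> closed F \<and> F face_of C"
proof -
  have "(\<forall>x\<in>C. \<forall>y\<in>C. \<forall>\<alpha>::real. 0 < \<alpha> \<and> \<alpha> < 1 \<and> \<alpha> *\<^sub>R x + (1 - \<alpha>) *\<^sub>R y \<in> F \<longrightarrow> x \<in> F \<and> y \<in> F)
      \<longleftrightarrow> (\<forall>a\<in>C. \<forall>b\<in>C. \<forall>x\<in>F. x \<in> open_segment a b \<longrightarrow> a \<in> F \<and> b \<in> F)"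
    (is "?combination \<longleftrightarrow> ?segment")
  proof
    assume ?combination
    show ?segment
    proof (intro ballI impI)
      fix a b x assume "a \<in> C" "b \<in> C" "x \<in> F" "x \<in> open_segment a b"
      then obtain u where "0 < u" "u < 1" "x = (1 - u) *\<^sub>R a + u *\<^sub>R b"
        by (auto simp: in_segment)
      with \<open>x \<in> F\<close> have "0 < 1 - u \<and> 1 - u < 1 \<and> (1 - u) *\<^sub>R a + (1 - (1 - u)) *\<^sub>R b \<in> F"
        by simp
      with \<open>?combination\<close> \<open>a \<in> C\<close> \<open>b \<in> C\<close> show "a \<in> F \<and> b \<in> F"
        by blast
    qed
  next
    assume ?segment
    show ?combination
    proof (intro ballI allI impI)
      fix x y and \<alpha> :: real
      assume "x \<in> C" "y \<in> C" and \<alpha>: "0 < \<alpha> \<and> \<alpha> < 1 \<and> \<alpha> *\<^sub>R x + (1 - \<alpha>) *\<^sub>R y \<in> F"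
      show "x \<in> F \<and> y \<in> F"
      proof (cases "x = y")
        case True
        with \<alpha> show ?thesis by (simp flip: scaleR_add_left)
      next
        case False
        with \<alpha> have "\<alpha> *\<^sub>R x + (1 - \<alpha>) *\<^sub>R y \<in> open_segment x y"
          by (auto simp: in_segment intro!: exI[of _ "1 - \<alpha>"])
        with \<open>?segment\<close> \<open>x \<in> C\<close> \<open>y \<in> C\<close> \<alpha> show ?thesis by blast
      qed
    qed
  qed
  then show ?thesis
    unfolding is_face_def face_of_def by blast
qed

lemma face_of_conic_hull_eq_conic_hull_Int:
  assumes F: "F face_of conic hull C" and nonzero: "\<not> F \<subseteq> {0}"
  shows "F = conic hull (F \<inter> C)"
proof
  have "conic F"
    using face_of_conic[OF conic_conic_hull F] .
  then show "conic hull (F \<inter> C) \<subseteq> F"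
    by (simp add: hull_minimal)
  have scaled_in_hull: "w \<in> conic hull (F \<inter> C)" if "w \<in> F" "w \<noteq> 0" for w
  proof -
    obtain s c where w: "w = s *\<^sub>R c" "0 \<le> s" "c \<in> C"
      using \<open>w \<in> F\<close> face_of_imp_subset[OF F] by (auto simp: conic_hull_explicit)
    with \<open>w \<noteq> 0\<close> have "s > 0" by auto
    with w conicD[OF \<open>conic F\<close> \<open>w \<in> F\<close>, of "1 / s"] have "c \<in> F"
      by simp
    with w show ?thesis
      by (auto simp: conic_hull_explicit)
  qed
  with nonzero have "0 \<in> conic hull (F \<inter> C)"
    by (metis conic_hull_contains_0 conic_hull_eq_empty empty_iff insertI1 subsetI)
  with scaled_in_hull show "F \<subseteq> conic hull (F \<inter> C)"
    by blast
qed

lemma amenable_face_affine: "affine F \<Longrightarrow> amenable_face F C"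
  unfolding amenable_face_def by (intro allI impI exI[of _ 1]) (simp add: hull_same infdist_nonneg)

lemma span_Int_hyperplane_subset_affine_hull:
  assumes G: "G \<subseteq> {x. e \<bullet> x = 1}"
  shows "span G \<inter> {x. e \<bullet> x = 1} \<subseteq> affine hull G"
proof
  fix z assume z: "z \<in> span G \<inter> {x. e \<bullet> x = 1}"
  show "z \<in> affine hull G"
  proof (cases "G = {}")
    case True
    with z show ?thesis by simp
  next
    case False
    then obtain g0 where g0: "g0 \<in> G" by blast
    define D where "D = (\<lambda>g. g - g0) ` G"
    have "G \<subseteq> span (insert g0 D)"
    proof
      fix g assume "g \<in> G"
      then have "(g - g0) + g0 \<in> span (insert g0 D)"
        unfolding D_def by (intro span_add span_base) auto
      then show "g \<in> span (insert g0 D)" by simp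
    qed
    then have "z \<in> span (insert g0 D)"
      using z span_minimal[OF _ subspace_span] by blast
    then obtain k where k: "z - k *\<^sub>R g0 \<in> span D"
      by (auto simp: span_insert)
    have "span D \<subseteq> {w. e \<bullet> w = 0}"
      using G g0 by (intro span_minimal subspace_hyperplane) (auto simp: D_def inner_diff_right subset_iff)
    with k have "e \<bullet> (z - k *\<^sub>R g0) = 0"
      by blast
    with z G g0 have "k = 1"
      by (auto simp: inner_diff_right)
    with k have "z - g0 \<in> span D" by simp
    moreover have "affine hull G = (+) g0 ` span D"
      using affine_hull_insert_span_gen[of g0 G] g0 by (simp add: insert_absorb D_def)
    ultimately show ?thesis
      by (auto intro!: image_eqI[of _ _ "z - g0"])
  qed
qed

lemma infdist_le_infdist_conic_hull:
  fixes e :: "'a::real_inner"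
  assumes C: "C \<subseteq> {x. e \<bullet> x = 1}" and M: "\<And>c. c \<in> C \<Longrightarrow> norm c \<le> M"
    and z: "e \<bullet> z = 1"
  shows "infdist z C \<le> (1 + norm e * M) * infdist z (conic hull C)"
proof (cases "C = {}")
  case False
  then have pos: "0 < 1 + norm e * M"
    using M by (smt (verit) ex_in_conv mult_nonneg_nonneg norm_ge_zero)
  have "infdist z C \<le> (1 + norm e * M) * dist z y" if hy: "y \<in> conic hull C" for y
  proof -
    obtain s c where y: "y = s *\<^sub>R c" "c \<in> C"
      using hy by (auto simp: conic_hull_explicit)
    \<comment> \<open>\<open>z\<close> and \<open>c\<close> lie on the hyperplane, so the factor \<open>s\<close> is close to \<open>1\<close>.\<close>
    have "\<bar>1 - s\<bar> = \<bar>e \<bullet> (z - y)\<bar>"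
      using z y C by (auto simp: inner_diff_right)
    also have "\<dots> \<le> norm e * dist z y"
      by (simp add: dist_norm Cauchy_Schwarz_ineq2)
    finally have s: "\<bar>1 - s\<bar> \<le> norm e * dist z y" .
    have "infdist z C \<le> dist z y + dist y c"
      using infdist_le[OF \<open>c \<in> C\<close>, of z] dist_triangle[of z c y] by linarith
    also have "dist y c = \<bar>1 - s\<bar> * norm c"
      by (simp add: y dist_scaleR[of s c 1, simplified] abs_minus_commute)
    also have "\<dots> \<le> norm e * dist z y * M"
      using s M[OF \<open>c \<in> C\<close>] by (intro mult_mono) auto
    finally show ?thesis
      by (simp add: algebra_simps)
  qed
  with False have "infdist z C / (1 + norm e * M) \<le> infdist z (conic hull C)"
    using pos by (intro le_infdistI) (auto simp: pos_divide_le_eq mult.commute conic_hull_eq_empty)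
  with pos show ?thesis
    by (simp add: pos_divide_le_eq mult.commute)
qed (simp add: infdist_def)

lemma norm_le_infdist_conic_hull:
  fixes e :: "'a::real_inner"
  assumes C: "C \<subseteq> {x. e \<bullet> x = 1}" "C \<noteq> {}" and M: "\<And>c. c \<in> C \<Longrightarrow> norm c \<le> M"
    and x: "2 * M * (e \<bullet> x) \<le> norm x"
  shows "norm x \<le> 2 * (1 + norm e * M) * infdist x (conic hull C)"
proof -
  have "0 \<le> M"
    using C M by (meson ex_in_conv norm_ge_zero order_trans)
  then have pos: "0 < 1 + norm e * M"
    by (smt (verit) mult_nonneg_nonneg norm_ge_zero)
  have "norm x \<le> 2 * (1 + norm e * M) * dist x y" if hy: "y \<in> conic hull C" for y
  proof -
    obtain s c where y: "y = s *\<^sub>R c" "0 \<le> s" "c \<in> C"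
      using hy by (auto simp: conic_hull_explicit)
    have "s - e \<bullet> x = e \<bullet> (y - x)"
      using y C by (auto simp: inner_diff_right)
    also have "\<dots> \<le> norm e * dist x y"
      using Cauchy_Schwarz_ineq2[of e "y - x"] by (simp add: dist_norm norm_minus_commute)
    finally have s: "s \<le> e \<bullet> x + norm e * dist x y" by simp
    have "norm x \<le> norm y + dist x y"
      by (metis dist_norm norm_triangle_sub add.commute)
    also have "norm y \<le> s * M"
      using y M[OF \<open>c \<in> C\<close>] by (simp add: mult_left_mono)
    also have "s * M \<le> (e \<bullet> x + norm e * dist x y) * M"
      using s \<open>0 \<le> M\<close> by (rule mult_right_mono)
    finally show ?thesis
      using x by (simp add: algebra_simps)
  qed
  with C have "norm x / (2 * (1 + norm e * M)) \<le> infdist x (conic hull C)"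
    using pos by (intro le_infdistI) (auto simp: pos_divide_le_eq mult.commute conic_hull_eq_empty)
  with pos show ?thesis
    by (simp add: pos_divide_le_eq mult.commute)
qed

lemma amenable_face_conic_hull:
  fixes e :: "'a::euclidean_space"
  assumes C: "C \<subseteq> {x. e \<bullet> x = 1}" "bounded C"
    and G: "G \<subseteq> C" "G \<noteq> {}" "amenable_face G C"
  shows "amenable_face (conic hull G) (conic hull C)"
proof -
  obtain M where M: "0 < M" "\<And>c. c \<in> C \<Longrightarrow> norm c \<le> M"
    using \<open>bounded C\<close> by (auto simp: bounded_pos)
  obtain \<kappa> where \<kappa>: "0 < \<kappa>"
    "\<And>z. z \<in> affine hull G \<inter> cball 0 (2 * M) \<Longrightarrow> infdist z G \<le> \<kappa> * infdist z C"
    using \<open>amenable_face G C\<close> by (meson amenable_face_def bounded_cball)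
  define c where "c = 1 + norm e * M"
  have "0 < c"
    using M(1) by (simp add: c_def add_pos_nonneg)
  have "infdist x (conic hull G) \<le> max (\<kappa> * c) (2 * c) * infdist x (conic hull C)"
    if x: "x \<in> affine hull (conic hull G)" for x
  proof (cases "2 * M * (e \<bullet> x) \<le> norm x")
    case True
    have "infdist x (conic hull G) \<le> norm x"
      using infdist_le[of 0 "conic hull G" x] G(2) by simp
    also have "\<dots> \<le> 2 * c * infdist x (conic hull C)"
      using norm_le_infdist_conic_hull[OF C(1) _ M(2) True] G by (auto simp: c_def)
    also have "\<dots> \<le> max (\<kappa> * c) (2 * c) * infdist x (conic hull C)"
      by (intro mult_right_mono infdist_nonneg) simp
    finally show ?thesis .
  next
    case False
    define t where "t = e \<bullet> x"
    have "0 < t"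
      using False M(1) mult_nonneg_nonpos[of "2 * M" "e \<bullet> x"] norm_ge_zero[of x]
      unfolding t_def by linarith
    define z where "z = (1 / t) *\<^sub>R x"
    have x_eq: "x = t *\<^sub>R z" and ez: "e \<bullet> z = 1" and "norm z \<le> 2 * M"
      using \<open>0 < t\<close> False by (auto simp: z_def t_def divide_le_eq mult.commute)
    have "affine hull (conic hull G) \<subseteq> span G"
      by (intro hull_minimal subspace_imp_affine subspace_span conic_span)
         (simp_all add: span_superset)
    with x have "z \<in> span G"
      by (auto simp: z_def span_mul)
    with ez C(1) G(1) have "z \<in> affine hull G"
      using span_Int_hyperplane_subset_affine_hull[of G e] by blast
    have "infdist x (conic hull G) = t * infdist z (conic hull G)"
      by (simp add: x_eq infdist_scaleR_conic conic_conic_hull \<open>0 < t\<close>)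
    also have "\<dots> \<le> t * infdist z G"
      using infdist_mono[OF hull_subset G(2)] \<open>0 < t\<close> by simp
    also have "\<dots> \<le> t * (\<kappa> * infdist z C)"
      using \<kappa>(2) \<open>z \<in> affine hull G\<close> \<open>norm z \<le> 2 * M\<close> \<open>0 < t\<close> by simp
    also have "\<dots> \<le> t * (\<kappa> * (c * infdist z (conic hull C)))"
      using infdist_le_infdist_conic_hull[OF C(1) M(2) ez] \<kappa>(1) \<open>0 < t\<close> by (simp add: c_def)
    also have "\<dots> = \<kappa> * c * infdist x (conic hull C)"
      by (simp add: x_eq infdist_scaleR_conic conic_conic_hull \<open>0 < t\<close>)
    also have "\<dots> \<le> max (\<kappa> * c) (2 * c) * infdist x (conic hull C)"
      by (intro mult_right_mono infdist_nonneg) simp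
    finally show ?thesis .
  qed
  then show ?thesis
    unfolding amenable_face_def using \<kappa>(1) \<open>0 < c\<close>
    by (intro allI impI exI[of _ "max (\<kappa> * c) (2 * c)"]) auto
qed

theorem theorem4p5:
  fixes e :: "'a::euclidean_space" and C :: "'a set"
  assumes "e \<noteq> 0"
    and "compact C" and "convex C"
    and "C \<subseteq> {x. e \<bullet> x = 1}"
    and "amenable C"
  shows "amenable (conic_hull C)"
  unfolding amenable_def conic_hull_eq_hull
proof (intro allI impI)
  fix F assume "is_face F (conic hull C)"
  then have "closed F" and face: "F face_of conic hull C"
    by (simp_all add: is_face_iff_closed_face_of)
  show "amenable_face F (conic hull C)"
  proof (cases "F \<subseteq> {0}")
    case True
    then have "affine F"
      by (metis affine_empty affine_sing subset_singletonD)
    then show ?thesis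
      by (rule amenable_face_affine)
  next
    case False
    then have F_eq: "F = conic hull (F \<inter> C)"
      by (rule face_of_conic_hull_eq_conic_hull_Int[OF face])
    have "(F \<inter> C) face_of C"
      using face_of_slice[OF face \<open>convex C\<close>] hull_subset[of C conic] by (simp add: Int_absorb1)
    with \<open>closed F\<close> \<open>compact C\<close> \<open>amenable C\<close> have "amenable_face (F \<inter> C) C"
      by (simp add: amenable_def is_face_iff_closed_face_of closed_Int compact_imp_closed)
    moreover have "F \<inter> C \<noteq> {}"
      using False F_eq by auto
    ultimately show ?thesis
      using amenable_face_conic_hull[OF \<open>C \<subseteq> _\<close> compact_imp_bounded[OF \<open>compact C\<close>]] F_eq
      by (metis inf_le2)
  qed
qed

end
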